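(* Let $\mathbb{G}$ be a Carnot group of homogeneous dimension $Q$ with Carnot-Carathéodory metric $d_{CC}$ and Haar measure $\mu$, and let $T=T_{\lambda}$ be an invariant $k$-precurrent on $\mathbb{G}$ (i.e. $\lambda\in\bigwedge^kH$ is constant). Then for every $r>0$, $\Delta_{r\#}T=r^{k-Q}\,T$, where $\Delta_{r\#}T(f\,dg^1\wedge\dots\wedge dg^k)=T\big((f\circ\Delta_r)\,d(g^1\circ\Delta_r)\wedge\dots\wedge d(g^k\circ\Delta_r)\big)$.
   Context: A Carnot group is a connected, simply connected Lie group whose Lie algebra has a stratification $\mathfrak g=V_1\oplus\dots\oplus V_m$ with $[V_1,V_j]=V_{j+1}$ ($j<m$), $[\mathfrak g,V_m]=0$; $H=V_1$ with a fixed inner product; homogeneous dimension $Q=\sum_j j\dim V_j$. $d_{CC}(p,q)$ is the infimum of lengths of piecewise smooth paths from $p$ to $q$ tangent to left translates of $H$. Dilations $\Delta_r$: group automorphisms whose differential multiplies $V_j$ by $r^j$. For $g$ locally $d_{CC}$-Lipschitz, $d_Pg_p\in\mathfrak g^*$ is the Pansu differential (differential of the homomorphism $q\mapsto\lim_{t\to0}(g(p\Delta_t(q))-g(p))/t$, existing for $\mu$-a.e. $p$). A $k$-precurrent is $T_\lambda(f\,dg^1\wedge\dots\wedge dg^k)=\int_{\mathbb{G}}\langle f\,d_Pg^1\wedge\dots\wedge d_Pg^k,\lambda\rangle\,d\mu$ ($f$ compactly supported Lipschitz or bounded Borel, $g^i$ locally $d_{CC}$-Lipschitz) with $\lambda\colon\mathbb{G}\to\bigwedge^kH$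 locally integrable; it is invariant if $\lambda$ is a.e. constant. *)

theory Defs
  imports "HOL-Analysis.Analysis"
begin

text \<open>
  The underlying set of the
  group is its Lie algebra g, realised as a Euclidean space 'a (so exp = id).
  The Lie bracket is br, the stratification is V 1, ..., V m, and the group law
  is the Baker-Campbell-Hausdorff product given by Dynkin's formula (a finite
  sum, since g is nilpotent of step m; all omitted terms are brackets of more
  than m elements and vanish).  The horizontal space is H = V 1, with the inner
  product inherited from 'a.
\<close>

fun rnb :: "('a \<Rightarrow> 'a \<Rightarrow> 'a) \<Rightarrow> 'a list \<Rightarrow> 'a::zero" where
  "rnb br [] = 0"
| "rnb br [z] = z"
| "rnb br (z # z' # zs) = br z (rnb br (z' # zs))"

definition dynkin_word :: "'a \<Rightarrow> 'a \<Rightarrow> (nat \<times> nat) list \<Rightarrow> 'a list" where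
  "dynkin_word X Y ps = concat (map (\<lambda>(a, b). replicate a X @ replicate b Y) ps)"

definition bch :: "nat \<Rightarrow> ('a::real_vector \<Rightarrow> 'a \<Rightarrow> 'a) \<Rightarrow> 'a \<Rightarrow> 'a \<Rightarrow> 'a" where
  "bch m br X Y =
     (\<Sum>n\<in>{1..m}. \<Sum>ps\<in>{ps. length ps = n \<and> set ps \<subseteq> {(a, b). a \<le> m \<and> b \<le> m \<and> 0 < a + b}}.
        ((-1) ^ (n - 1) / (real n * real (\<Sum>(a, b)\<leftarrow>ps. a + b) * (\<Prod>(a, b)\<leftarrow>ps. fact a * fact b)))
          *\<^sub>R rnb br (dynkin_word X Y ps))"

definition carnot :: "('a::euclidean_space \<Rightarrow> 'a \<Rightarrow> 'a) \<Rightarrow> nat \<Rightarrow> (nat \<Rightarrow> 'a set) \<Rightarrow> bool" where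
  "carnot br m V \<longleftrightarrow>
     1 \<le> m \<and> bilinear br \<and> (\<forall>x. br x x = 0) \<and>
     (\<forall>x y z. br x (br y z) + br y (br z x) + br z (br x y) = 0) \<and>
     (\<forall>j\<in>{1..m}. subspace (V j)) \<and>
     (\<forall>x. \<exists>!v. (\<forall>j. v j \<in> (if j \<in> {1..m} then V j else {0})) \<and> x = (\<Sum>j=1..m. v j)) \<and>
     (\<forall>j\<in>{1..<m}. span {br x y | x y. x \<in> V 1 \<and> y \<in> V j} = V (Suc j)) \<and>
     (\<forall>x y. y \<in> V m \<longrightarrow> br x y = 0)"

definition stratum_comp :: "nat \<Rightarrow> (nat \<Rightarrow> 'a::real_vector set) \<Rightarrow> nat \<Rightarrow> 'a \<Rightarrow> 'a" where
  "stratum_comp m V j x =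
     (THE v. (\<forall>i. v i \<in> (if i \<in> {1..m} then V i else {0})) \<and> x = (\<Sum>i=1..m. v i)) j"

definition dil :: "nat \<Rightarrow> (nat \<Rightarrow> 'a::real_vector set) \<Rightarrow> real \<Rightarrow> 'a \<Rightarrow> 'a" where
  "dil m V r x = (\<Sum>j=1..m. (r ^ j) *\<^sub>R stratum_comp m V j x)"

definition hom_dim :: "nat \<Rightarrow> (nat \<Rightarrow> 'a::euclidean_space set) \<Rightarrow> nat" where
  "hom_dim m V = (\<Sum>j=1..m. j * dim (V j))"

definition ltv :: "nat \<Rightarrow> ('a::euclidean_space \<Rightarrow> 'a \<Rightarrow> 'a) \<Rightarrow> 'a \<Rightarrow> 'a \<Rightarrow> 'a" where
  "ltv m br p v = vector_derivative (\<lambda>s. bch m br p (s *\<^sub>R v)) (at 0)"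

definition cc_dist :: "('a::euclidean_space \<Rightarrow> 'a \<Rightarrow> 'a) \<Rightarrow> nat \<Rightarrow> (nat \<Rightarrow> 'a set) \<Rightarrow> 'a \<Rightarrow> 'a \<Rightarrow> real" where
  "cc_dist br m V p q = Inf {integral {0..1} (\<lambda>t. norm (h t)) | \<gamma> h.
      \<gamma> piecewise_C1_differentiable_on {0..1::real} \<and> \<gamma> 0 = p \<and> \<gamma> 1 = q \<and>
      (\<lambda>t. norm (h t)) integrable_on {0..1} \<and>
      (\<exists>S. finite S \<and> (\<forall>t\<in>{0..1} - S. h t \<in> V 1 \<and>
            (\<gamma> has_vector_derivative ltv m br (\<gamma> t) (h t)) (at t within {0..1})))}"

definition cc_lipschitz :: "('a::euclidean_space \<Rightarrow> 'a \<Rightarrow> 'a) \<Rightarrow> nat \<Rightarrow> (nat \<Rightarrow> 'a set) \<Rightarrow> ('a \<Rightarrow> real) \<Rightarrow> bool" where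
  "cc_lipschitz br m V f \<longleftrightarrow> (\<exists>C. \<forall>x y. \<bar>f x - f y\<bar> \<le> C * cc_dist br m V x y)"

definition cc_loc_lipschitz :: "('a::euclidean_space \<Rightarrow> 'a \<Rightarrow> 'a) \<Rightarrow> nat \<Rightarrow> (nat \<Rightarrow> 'a set) \<Rightarrow> ('a \<Rightarrow> real) \<Rightarrow> bool" where
  "cc_loc_lipschitz br m V g \<longleftrightarrow>
     (\<forall>p. \<exists>e>0. \<exists>C. \<forall>x y. cc_dist br m V p x < e \<longrightarrow> cc_dist br m V p y < e \<longrightarrow>
          \<bar>g x - g y\<bar> \<le> C * cc_dist br m V x y)"

definition test_fun :: "('a::euclidean_space \<Rightarrow> 'a \<Rightarrow> 'a) \<Rightarrow> nat \<Rightarrow> (nat \<Rightarrow> 'a set) \<Rightarrow> ('a \<Rightarrow> real) \<Rightarrow> bool" where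
  "test_fun br m V f \<longleftrightarrow>
     (cc_lipschitz br m V f \<and> compact (closure {x. f x \<noteq> 0})) \<or>
     (f \<in> borel_measurable borel \<and> bounded (range f))"

text \<open>Pansu differential d_P g_p in g^*: the (linear, in exponential coordinates)
  homomorphism q |-> lim_{t->0+} (g(p Delta_t q) - g p)/t, where it exists; 0 elsewhere
  (a null set for locally Lipschitz g, by Pansu's theorem).\<close>
definition pansu_diff :: "('a::euclidean_space \<Rightarrow> 'a \<Rightarrow> 'a) \<Rightarrow> nat \<Rightarrow> (nat \<Rightarrow> 'a set) \<Rightarrow> ('a \<Rightarrow> real) \<Rightarrow> 'a \<Rightarrow> 'a \<Rightarrow> real" where
  "pansu_diff br m V g p =
     (if \<exists>L. linear L \<and> (\<forall>X Y. L (bch m br X Y) = L X + L Y) \<and>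
            (\<forall>X. ((\<lambda>t. (g (bch m br p (dil m V t X)) - g p) / t) \<longlongrightarrow> L X) (at_right 0))
      then (THE L. linear L \<and> (\<forall>X Y. L (bch m br X Y) = L X + L Y) \<and>
            (\<forall>X. ((\<lambda>t. (g (bch m br p (dil m V t X)) - g p) / t) \<longlongrightarrow> L X) (at_right 0)))
      else (\<lambda>_. 0))"

text \<open>Elements of \<Lambda>^k H, as finite formal sums  \<Sum> c * v1 \<and> ... \<and> vk  with vi in H.\<close>
definition kvec :: "nat \<Rightarrow> (nat \<Rightarrow> 'a set) \<Rightarrow> (real \<times> 'a list) list \<Rightarrow> bool" where
  "kvec k V lam \<longleftrightarrow> (\<forall>(c, vs)\<in>set lam. length vs = k \<and> set vs \<subseteq> V 1)"

definition wedge_pair :: "nat \<Rightarrow> (nat \<Rightarrow> 'a \<Rightarrow> real) \<Rightarrow> (real \<times> 'a list) list \<Rightarrow> real" where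
  "wedge_pair k \<alpha> lam =
     (\<Sum>(c, vs)\<leftarrow>lam. c * (\<Sum>\<sigma> | \<sigma> permutes {..<k}. of_int (sign \<sigma>) * (\<Prod>i<k. \<alpha> i (vs ! \<sigma> i))))"

text \<open>Invariant k-precurrent T_lam (lam constant), Haar measure = Lebesgue measure
  in exponential coordinates:  T (f dg^0 \<and> ... \<and> dg^{k-1}).\<close>
definition inv_precurrent :: "('a::euclidean_space \<Rightarrow> 'a \<Rightarrow> 'a) \<Rightarrow> nat \<Rightarrow> (nat \<Rightarrow> 'a set) \<Rightarrow> nat \<Rightarrow>
    (real \<times> 'a list) list \<Rightarrow> ('a \<Rightarrow> real) \<Rightarrow> (nat \<Rightarrow> 'a \<Rightarrow> real) \<Rightarrow> real" where
  "inv_precurrent br m V k lam f g =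
     (\<integral>p. f p * wedge_pair k (\<lambda>i. pansu_diff br m V (g i) p) lam \<partial>lborel)"

definition dil_push :: "nat \<Rightarrow> (nat \<Rightarrow> 'a::real_vector set) \<Rightarrow> real \<Rightarrow>
    (('a \<Rightarrow> real) \<Rightarrow> (nat \<Rightarrow> 'a \<Rightarrow> real) \<Rightarrow> real) \<Rightarrow> ('a \<Rightarrow> real) \<Rightarrow> (nat \<Rightarrow> 'a \<Rightarrow> real) \<Rightarrow> real" where
  "dil_push m V r T f g = T (f \<circ> dil m V r) (\<lambda>i. g i \<circ> dil m V r)"

end

theory Submission
  imports Defs
begin

text \<open>
  Dilations multiply the stratum V j by r^j. Since the bracket is graded, [V i, V j] \<subseteq> V (i + j),
  they are Lie algebra automorphisms and hence automorphisms of the group law given by Dynkin's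
  formula. Consequently the Pansu differential of g \<circ> \<delta> r at p is r times that of g at \<delta> r p,
  and the pairing of k such differentials with \<lambda> picks up the factor r^k. In a basis adapted to
  the stratification \<delta> r is diagonal with determinant r^Q, so substituting p \<mapsto> \<delta> r p in the
  Lebesgue integral contributes r^-Q. As determinants are not available on an abstract Euclidean
  space, the scaling of Lebesgue measure under an invertible linear map is derived from
  translation invariance by a Fubini argument.
\<close>

section \<open>Lebesgue measure under invertible linear maps\<close>

lemma lborel_distr_uminus_euclidean: "distr lborel borel uminus = (lborel :: 'a::euclidean_space measure)"
proof -
  have "(lborel :: 'a measure) = density (distr lborel borel (\<lambda>x. 0 + (-1) *\<^sub>R x)) (\<lambda>_. \<bar>-1::real\<bar> ^ DIM('a))"
    by (rule lborel_affine) simp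
  then show ?thesis by (simp add: density_1)
qed

lemma nn_integral_lborel_translate:
  fixes h :: "'a::euclidean_space \<Rightarrow> ennreal"
  assumes "h \<in> borel_measurable borel"
  shows "(\<integral>\<^sup>+x. h (a + x) \<partial>lborel) = (\<integral>\<^sup>+x. h x \<partial>lborel)"
  using nn_integral_distr[of "(+) a" lborel borel h] assms by (simp add: lborel_distr_plus)

lemma nn_integral_lborel_reflect:
  fixes h :: "'a::euclidean_space \<Rightarrow> ennreal"
  assumes "h \<in> borel_measurable borel"
  shows "(\<integral>\<^sup>+x. h (- x) \<partial>lborel) = (\<integral>\<^sup>+x. h x \<partial>lborel)"
  using nn_integral_distr[of uminus lborel borel h] assms by (simp add: lborel_distr_uminus_euclidean)

lemma linear_borel_measurable:
  "linear (f :: 'a::euclidean_space \<Rightarrow> 'b::euclidean_space) \<Longrightarrow> f \<in> borel_measurable borel"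
  by (intro borel_measurable_continuous_onI linear_continuous_on) (simp add: linear_conv_bounded_linear)

lemma emeasure_linear_vimage_swap:
  fixes S :: "'a::euclidean_space \<Rightarrow> 'a"
  assumes "linear S" "surj S" and [measurable]: "A \<in> sets borel" "B \<in> sets borel"
  shows "emeasure lborel (S -` A) * emeasure lborel B = emeasure lborel A * emeasure lborel (S -` B)"
proof -
  \<comment> \<open>Compute \<integral>\<integral> 1_A(S x) 1_B(S x + y) dy dx in both orders: translating x by T(-y) and
      reflecting y exchanges the roles of A and B.\<close>
  obtain T where T: "\<And>y. S (T y) = y"
    using linear_surjective_isomorphism[OF assms(1,2)] by blast
  note [measurable] = linear_borel_measurable[OF assms(1)]
  define F :: "'a set \<Rightarrow> 'a set \<Rightarrow> 'a \<Rightarrow> 'a \<Rightarrow> ennreal"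
    where "F X Y x y = indicator X (S x) * indicator Y (S x + y)" for X Y x y
  have [measurable]: "case_prod (F X Y) \<in> borel_measurable (lborel \<Otimes>\<^sub>M lborel)"
    "(\<lambda>(y, x). F X Y x y) \<in> borel_measurable (lborel \<Otimes>\<^sub>M lborel)"
    if [measurable]: "X \<in> sets borel" "Y \<in> sets borel" for X Y
    unfolding F_def by measurable
  have iterated: "(\<integral>\<^sup>+x. \<integral>\<^sup>+y. F X Y x y \<partial>lborel \<partial>lborel) = emeasure lborel (S -` X) * emeasure lborel Y"
    if [measurable]: "X \<in> sets borel" "Y \<in> sets borel" for X Y
  proof -
    have "(\<integral>\<^sup>+y. F X Y x y \<partial>lborel) = indicator (S -` X) x * emeasure lborel Y" for x
      using nn_integral_lborel_translate[of "indicator Y" "S x"]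
      by (simp add: F_def nn_integral_cmult indicator_vimage[symmetric])
    moreover have "S -` X \<in> sets borel"
      using measurable_sets_borel[OF linear_borel_measurable[OF assms(1)] that(1)] by simp
    ultimately show ?thesis
      by (simp add: nn_integral_multc)
  qed
  have swap: "(\<integral>\<^sup>+x. F B A x y \<partial>lborel) = (\<integral>\<^sup>+x. F A B x (- y) \<partial>lborel)" for y
    using nn_integral_lborel_translate[of "\<lambda>x. F B A x y" "T (- y)"]
    by (simp add: F_def linear_add[OF assms(1)] T mult.commute)
  have "emeasure lborel (S -` A) * emeasure lborel B = (\<integral>\<^sup>+x. \<integral>\<^sup>+y. F A B x y \<partial>lborel \<partial>lborel)"
    by (simp add: iterated)
  also have "\<dots> = (\<integral>\<^sup>+y. \<integral>\<^sup>+x. F A B x y \<partial>lborel \<partial>lborel)"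
    by (rule lborel_pair.Fubini'[symmetric]) measurable
  also have "\<dots> = (\<integral>\<^sup>+y. \<integral>\<^sup>+x. F A B x (- y) \<partial>lborel \<partial>lborel)"
    by (rule nn_integral_lborel_reflect[symmetric]) measurable
  also have "\<dots> = (\<integral>\<^sup>+y. \<integral>\<^sup>+x. F B A x y \<partial>lborel \<partial>lborel)"
    by (simp add: swap)
  also have "\<dots> = (\<integral>\<^sup>+x. \<integral>\<^sup>+y. F B A x y \<partial>lborel \<partial>lborel)"
    by (rule lborel_pair.Fubini') measurable
  also have "\<dots> = emeasure lborel A * emeasure lborel (S -` B)"
    by (simp add: iterated mult.commute)
  finally show ?thesis .
qed

text \<open>For invertible S this is 1 / |det S|.\<close>

definition linear_vimage_factor :: "('a::euclidean_space \<Rightarrow> 'a) \<Rightarrow> ennreal" where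
  "linear_vimage_factor S = emeasure lborel (S -` cbox 0 One)"

lemma emeasure_linear_vimage:
  fixes S :: "'a::euclidean_space \<Rightarrow> 'a"
  assumes "linear S" "surj S" "A \<in> sets borel"
  shows "emeasure lborel (S -` A) = linear_vimage_factor S * emeasure lborel A"
  using emeasure_linear_vimage_swap[OF assms, of "cbox 0 One"]
  by (simp add: linear_vimage_factor_def emeasure_lborel_cbox_eq mult.commute)

lemma linear_vimage_factor_comp:
  fixes S T :: "'a::euclidean_space \<Rightarrow> 'a"
  assumes "linear S" "linear T" "surj T"
  shows "linear_vimage_factor (S \<circ> T) = linear_vimage_factor T * linear_vimage_factor S"
proof -
  have "S -` cbox 0 One \<in> sets borel"
    using measurable_sets_borel[OF linear_borel_measurable[OF assms(1)]] by simp
  from emeasure_linear_vimage[OF assms(2,3) this]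
  have "emeasure lborel (T -` (S -` cbox 0 One)) = linear_vimage_factor T * linear_vimage_factor S"
    by (simp add: linear_vimage_factor_def)
  then show ?thesis
    by (simp add: linear_vimage_factor_def vimage_comp)
qed

lemma linear_vimage_factor_id: "linear_vimage_factor (\<lambda>x::'a::euclidean_space. x) = 1"
  by (simp add: linear_vimage_factor_def emeasure_lborel_cbox_eq)

lemma linear_vimage_factor_similar:
  fixes S G A :: "'a::euclidean_space \<Rightarrow> 'a"
  assumes "linear S" "linear G" "surj G" "linear A" "surj A" and conj: "S \<circ> A = A \<circ> G"
  shows "linear_vimage_factor S = linear_vimage_factor G"
proof -
  obtain A' where A': "linear A'" "\<And>x. A' (A x) = x" "\<And>x. A (A' x) = x"
    using linear_surjective_isomorphism[OF assms(4,5)] by blast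
  have "surj A'"
    by (rule surjI[of A' A]) (rule A'(2))
  moreover have "A \<circ> A' = (\<lambda>x. x)"
    using A'(3) by (simp add: fun_eq_iff)
  ultimately have inv: "linear_vimage_factor A' * linear_vimage_factor A = 1"
    using linear_vimage_factor_comp[OF assms(4) A'(1)] linear_vimage_factor_id by metis
  have "linear_vimage_factor S = linear_vimage_factor A' * linear_vimage_factor A * linear_vimage_factor S"
    by (simp add: inv)
  also have "\<dots> = linear_vimage_factor A' * linear_vimage_factor (A \<circ> G)"
    using linear_vimage_factor_comp[OF assms(1,4,5)] by (simp add: conj mult.assoc)
  also have "\<dots> = linear_vimage_factor A' * linear_vimage_factor A * linear_vimage_factor G"
    using linear_vimage_factor_comp[OF assms(4,2,3)] by (simp add: ac_simps)
  finally show ?thesis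
    by (simp add: inv)
qed

lemma linear_vimage_factor_diagonal:
  fixes e :: "'a::euclidean_space \<Rightarrow> real"
  assumes "\<And>b. b \<in> Basis \<Longrightarrow> e b \<noteq> 0"
  shows "linear_vimage_factor (\<lambda>x. \<Sum>b\<in>Basis. (e b * (x \<bullet> b)) *\<^sub>R b) = ennreal (1 / (\<Prod>b\<in>Basis. \<bar>e b\<bar>))"
proof -
  define T :: "'a \<Rightarrow> 'a" where "T x = (\<Sum>b\<in>Basis. (e b * (x \<bullet> b)) *\<^sub>R b)" for x
  define P where "P = (\<Prod>b\<in>Basis. \<bar>e b\<bar>)"
  have "P > 0"
    unfolding P_def using assms by (intro prod_pos) auto
  have "T \<in> borel_measurable borel"
    unfolding T_def by (intro borel_measurable_continuous_onI continuous_intros)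
  have "lborel = density (distr lborel borel T) (\<lambda>_. P)"
    using lborel_affine_euclidean[of e 0] assms unfolding T_def P_def by simp
  then have "1 = emeasure (density (distr lborel borel T) (\<lambda>_. P)) (cbox 0 (One::'a))"
    using emeasure_lborel_cbox_eq[of "0::'a" One] by simp
  also have "\<dots> = P * linear_vimage_factor T"
    using \<open>T \<in> borel_measurable borel\<close>
    by (simp add: emeasure_density nn_integral_cmult_indicator emeasure_distr linear_vimage_factor_def)
  finally have one: "1 = ennreal P * linear_vimage_factor T" .
  have "linear_vimage_factor T = ennreal (1 / P) * (ennreal P * linear_vimage_factor T)"
    using \<open>P > 0\<close> by (simp add: ennreal_mult'[symmetric] mult.assoc[symmetric])
  also have "\<dots> = ennreal (1 / P)"
    unfolding one[symmetric] by simp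
  finally show ?thesis
    unfolding T_def P_def .
qed

locale carnot_algebra =
  fixes br :: "'a::euclidean_space \<Rightarrow> 'a \<Rightarrow> 'a" and m :: nat and V :: "nat \<Rightarrow> 'a set"
  assumes carnot: "carnot br m V"
begin

lemma step_pos: "1 \<le> m"
  and bilinear_br: "bilinear br"
  and br_self: "br x x = 0"
  and jacobi: "br x (br y z) + br y (br z x) + br z (br x y) = 0"
  and subspace_V: "j \<in> {1..m} \<Longrightarrow> subspace (V j)"
  and bracket_generates: "j \<in> {1..<m} \<Longrightarrow> span {br x y | x y. x \<in> V 1 \<and> y \<in> V j} = V (Suc j)"
  and br_top: "y \<in> V m \<Longrightarrow> br x y = 0"
  using carnot by (simp_all add: carnot_def)

definition stratum :: "nat \<Rightarrow> 'a set" where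
  "stratum j = (if j \<in> {1..m} then V j else {0})"

lemma subspace_stratum: "subspace (stratum j)"
  using subspace_V by (simp add: stratum_def subspace_0)

lemma zero_in_stratum: "0 \<in> stratum j"
  using subspace_stratum subspace_0 by blast

lemma stratum_1: "stratum 1 = V 1"
  using step_pos by (simp add: stratum_def)

lemma unique_decomposition: "\<exists>!v. (\<forall>j. v j \<in> stratum j) \<and> x = (\<Sum>j=1..m. v j)"
  using carnot unfolding carnot_def stratum_def by blast

abbreviation proj :: "nat \<Rightarrow> 'a \<Rightarrow> 'a" where
  "proj \<equiv> stratum_comp m V"

lemma proj_decomposition: "(\<forall>j. proj j x \<in> stratum j) \<and> x = (\<Sum>j=1..m. proj j x)"
  using theI'[OF unique_decomposition] by (simp add: stratum_comp_def stratum_def)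

lemma proj_in_stratum: "proj j x \<in> stratum j"
  using proj_decomposition by blast

lemma sum_proj: "(\<Sum>j=1..m. proj j x) = x"
  using proj_decomposition by simp

lemma proj_unique:
  assumes "\<And>j. v j \<in> stratum j" "x = (\<Sum>j=1..m. v j)"
  shows "proj j x = v j"
proof -
  have "(THE v. (\<forall>i. v i \<in> stratum i) \<and> x = (\<Sum>i=1..m. v i)) = v"
    by (rule the1_equality[OF unique_decomposition]) (use assms in blast)
  then show ?thesis
    by (simp add: stratum_comp_def stratum_def)
qed

lemma linear_proj: "linear (proj j)"
proof (rule linearI)
  show "proj j (x + y) = proj j x + proj j y" for x y
  proof (rule proj_unique)
    show "proj i x + proj i y \<in> stratum i" for i
      by (simp add: subspace_add[OF subspace_stratum] proj_in_stratum)
    show "x + y = (\<Sum>i=1..m. proj i x + proj i y)"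
      by (simp only: sum.distrib sum_proj)
  qed
  show "proj j (c *\<^sub>R x) = c *\<^sub>R proj j x" for c x
  proof (rule proj_unique)
    show "c *\<^sub>R proj i x \<in> stratum i" for i
      by (simp add: subspace_scale[OF subspace_stratum] proj_in_stratum)
    show "c *\<^sub>R x = (\<Sum>i=1..m. c *\<^sub>R proj i x)"
      by (simp only: sum_proj flip: scaleR_sum_right)
  qed
qed

lemma proj_stratum:
  assumes "x \<in> stratum n"
  shows "proj j x = (if j = n then x else 0)"
proof (rule proj_unique)
  show "(if i = n then x else 0) \<in> stratum i" for i
    using assms zero_in_stratum by simp
  show "x = (\<Sum>i=1..m. if i = n then x else 0)"
    using assms by (simp add: stratum_def split: if_splits)
qed

abbreviation \<delta> :: "real \<Rightarrow> 'a \<Rightarrow> 'a" where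
  "\<delta> r \<equiv> dil m V r"

lemma linear_dil: "linear (\<delta> r)"
  unfolding dil_def by (intro linear_compose_sum ballI linear_compose_scale_right linear_proj)

lemma dil_stratum: "x \<in> stratum n \<Longrightarrow> \<delta> r x = r ^ n *\<^sub>R x"
  by (auto simp: dil_def proj_stratum if_distrib stratum_def cong: if_cong)

lemma proj_dil: "proj j (\<delta> r x) = r ^ j *\<^sub>R proj j x"
  by (rule proj_unique) (simp_all add: subspace_scale[OF subspace_stratum] proj_in_stratum dil_def)

lemma dil_dil: "\<delta> r (\<delta> t x) = \<delta> (r * t) x"
  by (simp add: dil_def[of m V r "\<delta> t x"] dil_def[of m V "r * t" x] proj_dil power_mult_distrib)

lemma dil_one: "\<delta> 1 x = x"
  unfolding dil_def by (simp only: power_one scaleR_one sum_proj)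

lemma dil_inverse: "r \<noteq> 0 \<Longrightarrow> \<delta> r (\<delta> (inverse r) x) = x"
  by (simp add: dil_dil dil_one)

section \<open>Dilations are automorphisms of the group law\<close>

lemma br_antisym: "br x y = - br y x"
proof -
  have "br (x + y) (x + y) = br x x + br y x + (br x y + br y y)"
    by (simp only: bilinear_ladd[OF bilinear_br] bilinear_radd[OF bilinear_br])
  then show ?thesis
    by (simp add: br_self eq_neg_iff_add_eq_0 add.commute)
qed

lemma br_leibniz: "br (br a b) y = br a (br b y) - br b (br a y)"
  using jacobi[of a b y] br_antisym[of y "br a b"] br_antisym[of y a]
    bilinear_rneg[OF bilinear_br, of b "br a y"]
  by (simp add: algebra_simps eq_neg_iff_add_eq_0)

lemma br_V1_stratum:
  assumes "x \<in> V 1" "y \<in> stratum n"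
  shows "br x y \<in> stratum (Suc n)"
proof -
  consider "n \<in> {1..<m}" | "n = m" | "y = 0"
    using assms(2) by (fastforce simp: stratum_def split: if_splits)
  then show ?thesis
  proof cases
    case 1
    then have "br x y \<in> span {br x y | x y. x \<in> V 1 \<and> y \<in> V n}"
      using assms by (intro span_base) (auto simp: stratum_def)
    with 1 show ?thesis
      using bracket_generates[OF 1] by (auto simp: stratum_def)
  next
    case 2
    then show ?thesis
      using assms step_pos br_top zero_in_stratum by (simp add: stratum_def)
  next
    case 3
    then show ?thesis
      using zero_in_stratum by (simp add: bilinear_rzero[OF bilinear_br])
  qed
qed

lemma br_grading: "x \<in> stratum i \<Longrightarrow> y \<in> stratum j \<Longrightarrow> br x y \<in> stratum (i + j)"
proof (induction i arbitrary: x y j)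
  case 0
  then show ?case
    using zero_in_stratum by (simp add: stratum_def bilinear_lzero[OF bilinear_br])
next
  case (Suc i)
  consider "i = 0" | "Suc i \<notin> {1..m}" | "i \<in> {1..<m}"
    by fastforce
  then show ?case
  proof cases
    case 1
    with Suc.prems(1) have "x \<in> V 1"
      using stratum_1 by simp
    with 1 show ?thesis
      using br_V1_stratum[OF _ Suc.prems(2)] by simp
  next
    case 2
    then show ?thesis
      using Suc.prems zero_in_stratum by (simp add: stratum_def bilinear_lzero[OF bilinear_br])
  next
    case 3
    have "x \<in> span {br a b | a b. a \<in> V 1 \<and> b \<in> V i}"
      using bracket_generates[OF 3] Suc.prems(1) 3 by (simp add: stratum_def)
    moreover have "subspace ((\<lambda>x. br x y) -` stratum (Suc i + j))"
      using bilinear_br by (intro linear_subspace_vimage subspace_stratum) (simp add: bilinear_def)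
    moreover have "br (br a b) y \<in> stratum (Suc i + j)" if "a \<in> V 1" "b \<in> V i" for a b
    proof -
      have "b \<in> stratum i"
        using that(2) 3 by (simp add: stratum_def)
      then have "br a (br b y) \<in> stratum (Suc i + j)" "br b (br a y) \<in> stratum (Suc i + j)"
        using br_V1_stratum[OF that(1) Suc.IH] Suc.IH[OF _ br_V1_stratum[OF that(1) Suc.prems(2)]]
          Suc.prems(2) by simp_all
      then show ?thesis
        by (simp add: br_leibniz subspace_diff[OF subspace_stratum])
    qed
    ultimately show ?thesis
      using span_minimal[of "{br a b | a b. a \<in> V 1 \<and> b \<in> V i}" "(\<lambda>x. br x y) -` stratum (Suc i + j)"]
      by blast
  qed
qed

lemma dil_br: "\<delta> r (br x y) = br (\<delta> r x) (\<delta> r y)"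
proof -
  let ?I = "{1..m} \<times> {1..m}"
  have "\<delta> r (br x y) = \<delta> r (\<Sum>(i, j)\<in>?I. br (proj i x) (proj j y))"
    using bilinear_sum[OF bilinear_br, of "\<lambda>i. proj i x" "{1..m}" "\<lambda>j. proj j y" "{1..m}"]
    by (simp only: sum_proj)
  also have "\<dots> = (\<Sum>(i, j)\<in>?I. r ^ (i + j) *\<^sub>R br (proj i x) (proj j y))"
    unfolding linear_sum[OF linear_dil]
    by (intro sum.cong refl) (auto intro!: dil_stratum br_grading proj_in_stratum)
  also have "\<dots> = (\<Sum>(i, j)\<in>?I. br (r ^ i *\<^sub>R proj i x) (r ^ j *\<^sub>R proj j y))"
    by (intro sum.cong refl)
      (auto simp: bilinear_lmul[OF bilinear_br] bilinear_rmul[OF bilinear_br] power_add)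
  also have "\<dots> = br (\<delta> r x) (\<delta> r y)"
    unfolding dil_def by (rule bilinear_sum[OF bilinear_br, symmetric])
  finally show ?thesis .
qed

lemma dil_rnb: "\<delta> r (rnb br w) = rnb br (map (\<delta> r) w)"
  by (induction w rule: induct_list012) (simp_all add: linear_0[OF linear_dil] dil_br)

lemma dil_dynkin_word: "map (\<delta> r) (dynkin_word X Y ps) = dynkin_word (\<delta> r X) (\<delta> r Y) ps"
  unfolding dynkin_word_def by (induction ps) auto

lemma dil_bch: "\<delta> r (bch m br X Y) = bch m br (\<delta> r X) (\<delta> r Y)"
  unfolding bch_def
  by (simp add: linear_sum[OF linear_dil] linear_scale[OF linear_dil] dil_rnb dil_dynkin_word)

end

section \<open>Pansu differentials of dilated functions\<close>

lemma tendsto_at_right_0_rescale: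
  fixes f :: "real \<Rightarrow> 'b::topological_space"
  assumes "r > 0"
  shows "((\<lambda>t. f (r * t)) \<longlongrightarrow> l) (at_right 0) \<longleftrightarrow> (f \<longlongrightarrow> l) (at_right 0)"
  using tendsto_compose_filtermap[of f "times r" l "at_right 0"] filtermap_times_pos_at_right[OF assms, of 0]
  by (simp add: comp_def)

context carnot_algebra
begin

definition has_pansu_diff :: "('a \<Rightarrow> real) \<Rightarrow> 'a \<Rightarrow> ('a \<Rightarrow> real) \<Rightarrow> bool" where
  "has_pansu_diff g p L \<longleftrightarrow> linear L \<and> (\<forall>X Y. L (bch m br X Y) = L X + L Y) \<and>
     (\<forall>X. ((\<lambda>t. (g (bch m br p (\<delta> t X)) - g p) / t) \<longlongrightarrow> L X) (at_right 0))"

lemma pansu_diff_eq: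
  "pansu_diff br m V g p = (if \<exists>L. has_pansu_diff g p L then THE L. has_pansu_diff g p L else (\<lambda>_. 0))"
  unfolding pansu_diff_def has_pansu_diff_def ..

lemma has_pansu_diff_unique:
  assumes "has_pansu_diff g p L" "has_pansu_diff g p L'"
  shows "L = L'"
proof
  fix X
  show "L X = L' X"
    using assms unfolding has_pansu_diff_def
    by (blast intro: tendsto_unique[OF trivial_limit_at_right_real])
qed

lemma has_pansu_diff_dil:
  assumes "r > 0" and L: "has_pansu_diff g (\<delta> r p) L"
  shows "has_pansu_diff (g \<circ> \<delta> r) p (\<lambda>X. r * L X)"
  unfolding has_pansu_diff_def
proof (intro conjI allI)
  show "linear (\<lambda>X. r * L X)"
    using L linear_compose_scale_right unfolding has_pansu_diff_def by fastforce
  show "r * L (bch m br X Y) = r * L X + r * L Y" for X Y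
    using L unfolding has_pansu_diff_def by (simp add: distrib_left)
  fix X
  have quotient: "((g \<circ> \<delta> r) (bch m br p (\<delta> t X)) - (g \<circ> \<delta> r) p) / t
      = r * ((g (bch m br (\<delta> r p) (\<delta> (r * t) X)) - g (\<delta> r p)) / (r * t))" for t
    using \<open>r > 0\<close> by (cases "t = 0") (simp_all add: dil_bch dil_dil)
  have "((\<lambda>t. (g (bch m br (\<delta> r p) (\<delta> t X)) - g (\<delta> r p)) / t) \<longlongrightarrow> L X) (at_right 0)"
    using L unfolding has_pansu_diff_def by blast
  then have "((\<lambda>t. (g (bch m br (\<delta> r p) (\<delta> (r * t) X)) - g (\<delta> r p)) / (r * t)) \<longlongrightarrow> L X) (at_right 0)"
    by (simp add: tendsto_at_right_0_rescale[OF \<open>r > 0\<close>, where f = "\<lambda>t. (g (bch m br (\<delta> r p) (\<delta> t X)) - g (\<delta> r p)) / t"])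
  then show "((\<lambda>t. ((g \<circ> \<delta> r) (bch m br p (\<delta> t X)) - (g \<circ> \<delta> r) p) / t) \<longlongrightarrow> r * L X) (at_right 0)"
    unfolding quotient by (rule tendsto_mult_left)
qed

lemma pansu_diff_dil:
  assumes "r > 0"
  shows "pansu_diff br m V (g \<circ> \<delta> r) p = (\<lambda>X. r * pansu_diff br m V g (\<delta> r p) X)"
proof (cases "\<exists>L. has_pansu_diff g (\<delta> r p) L")
  case True
  then obtain L where L: "has_pansu_diff g (\<delta> r p) L" ..
  then have "(THE L. has_pansu_diff g (\<delta> r p) L) = L"
    using has_pansu_diff_unique by blast
  moreover have "(THE L'. has_pansu_diff (g \<circ> \<delta> r) p L') = (\<lambda>X. r * L X)"
    using has_pansu_diff_dil[OF assms L] has_pansu_diff_unique by blast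
  ultimately show ?thesis
    unfolding pansu_diff_eq using True has_pansu_diff_dil[OF assms L] by auto
next
  case False
  have "g \<circ> \<delta> r \<circ> \<delta> (inverse r) = g" "\<delta> (inverse r) (\<delta> r p) = p"
    using assms by (simp_all add: fun_eq_iff dil_inverse dil_dil dil_one)
  then have "\<not> has_pansu_diff (g \<circ> \<delta> r) p L" for L
    using False has_pansu_diff_dil[of "inverse r" "g \<circ> \<delta> r" "\<delta> r p" L] assms by auto
  then show ?thesis
    unfolding pansu_diff_eq using False by auto
qed

section \<open>The Jacobian of a dilation\<close>

definition stratum_basis :: "nat \<Rightarrow> 'a set" where
  "stratum_basis j = (SOME B. B \<subseteq> V j \<and> independent B \<and> V j \<subseteq> span B \<and> card B = dim (V j))"

lemma stratum_basis:
  "stratum_basis j \<subseteq> V j \<and> independent (stratum_basis j) \<and> V j \<subseteq> span (stratum_basis j) \<and>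
     card (stratum_basis j) = dim (V j)"
  unfolding stratum_basis_def by (rule someI_ex) (meson basis_exists)

lemma finite_stratum_basis: "finite (stratum_basis j)"
  using stratum_basis independent_bound by blast

lemma stratum_basis_in_stratum: "j \<in> {1..m} \<Longrightarrow> v \<in> stratum_basis j \<Longrightarrow> v \<in> stratum j"
  using stratum_basis by (auto simp: stratum_def)

lemma disjoint_stratum_basis:
  assumes "i \<in> {1..m}" "j \<in> {1..m}" "i \<noteq> j"
  shows "stratum_basis i \<inter> stratum_basis j = {}"
proof (intro equals0I)
  fix v assume v: "v \<in> stratum_basis i \<inter> stratum_basis j"
  then have "proj i v = v" "proj i v = 0"
    using proj_stratum[OF stratum_basis_in_stratum[OF assms(1)], of v i]
      proj_stratum[OF stratum_basis_in_stratum[OF assms(2)], of v i] assms(3) by auto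
  moreover have "v \<noteq> 0"
    using v stratum_basis dependent_zero by blast
  ultimately show False
    by simp
qed

definition adapted_basis :: "'a set" where
  "adapted_basis = (\<Union>j\<in>{1..m}. stratum_basis j)"

lemma finite_adapted_basis: "finite adapted_basis"
  unfolding adapted_basis_def using finite_stratum_basis by blast

lemma sum_adapted_basis:
  "(\<Sum>v\<in>adapted_basis. f v) = (\<Sum>j=1..m. \<Sum>v\<in>stratum_basis j. f v)"
  unfolding adapted_basis_def
  using finite_stratum_basis disjoint_stratum_basis by (intro sum.UNION_disjoint) auto

lemma span_adapted_basis: "span adapted_basis = UNIV"
proof -
  have "proj j x \<in> span adapted_basis" if "j \<in> {1..m}" for j x
  proof -
    have "proj j x \<in> span (stratum_basis j)"
      using proj_in_stratum[of j x] stratum_basis that by (auto simp: stratum_def)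
    moreover have "span (stratum_basis j) \<subseteq> span adapted_basis"
      using that by (intro span_mono) (auto simp: adapted_basis_def)
    ultimately show ?thesis
      by blast
  qed
  then have "(\<Sum>j=1..m. proj j x) \<in> span adapted_basis" for x
    by (intro span_sum) simp
  then show ?thesis
    by (simp only: sum_proj) blast
qed

lemma independent_adapted_basis: "independent adapted_basis"
  unfolding independent_explicit
proof (intro conjI allI impI ballI)
  show "finite adapted_basis"
    by (rule finite_adapted_basis)
  fix c :: "'a \<Rightarrow> real" and v
  assume sum0: "(\<Sum>v\<in>adapted_basis. c v *\<^sub>R v) = 0" and v: "v \<in> adapted_basis"
  define w where "w j = (if j \<in> {1..m} then \<Sum>v\<in>stratum_basis j. c v *\<^sub>R v else 0)" for j
  have "w j \<in> stratum j" for j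
    using stratum_basis subspace_V zero_in_stratum
    by (auto simp: w_def stratum_def intro!: subspace_sum subspace_scale)
  moreover have "0 = (\<Sum>j=1..m. w j)"
    using sum0 by (simp add: sum_adapted_basis w_def)
  ultimately have "w j = proj j 0" for j
    using proj_unique by metis
  then have "w j = 0" for j
    by (simp add: linear_0[OF linear_proj])
  moreover obtain j where j: "j \<in> {1..m}" "v \<in> stratum_basis j"
    using v by (auto simp: adapted_basis_def)
  ultimately have "(\<Sum>v\<in>stratum_basis j. c v *\<^sub>R v) = 0"
    unfolding w_def by metis
  with j(2) show "c v = 0"
    using stratum_basis[of j] unfolding independent_explicit by blast
qed

lemma card_adapted_basis: "card adapted_basis = DIM('a)"
  using basis_card_eq_dim[of adapted_basis UNIV] span_adapted_basis independent_adapted_basis by simp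

definition weight :: "'a \<Rightarrow> nat" where
  "weight v = (THE j. j \<in> {1..m} \<and> v \<in> stratum_basis j)"

lemma weight_eq: "j \<in> {1..m} \<Longrightarrow> v \<in> stratum_basis j \<Longrightarrow> weight v = j"
  unfolding weight_def using disjoint_stratum_basis by (intro the_equality) auto

lemma adapted_basis_in_stratum: "v \<in> adapted_basis \<Longrightarrow> v \<in> stratum (weight v)"
  by (auto simp: adapted_basis_def weight_eq stratum_basis_in_stratum)

lemma sum_weight: "(\<Sum>v\<in>adapted_basis. weight v) = hom_dim m V"
proof -
  have "(\<Sum>v\<in>adapted_basis. weight v) = (\<Sum>j=1..m. \<Sum>v\<in>stratum_basis j. j)"
    unfolding sum_adapted_basis by (intro sum.cong refl) (simp add: weight_eq)
  also have "\<dots> = (\<Sum>j=1..m. j * dim (V j))"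
    using stratum_basis by (simp add: mult.commute)
  finally show ?thesis
    by (simp add: hom_dim_def)
qed

lemma surj_dil: "r \<noteq> 0 \<Longrightarrow> surj (\<delta> r)"
  by (rule surjI[of _ "\<delta> (inverse r)"]) (rule dil_inverse)

lemma linear_vimage_factor_dil:
  assumes "s > 0"
  shows "linear_vimage_factor (\<delta> s) = ennreal (1 / s ^ hom_dim m V)"
proof -
  have "card (Basis :: 'a set) = card adapted_basis"
    by (simp add: card_adapted_basis)
  then obtain u :: "'a \<Rightarrow> 'a" where u: "bij_betw u Basis adapted_basis"
    using finite_same_card_bij[of "Basis :: 'a set" adapted_basis] finite_adapted_basis by auto
  define A :: "'a \<Rightarrow> 'a" where "A x = (\<Sum>b\<in>Basis. (x \<bullet> b) *\<^sub>R u b)" for x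
  define G :: "'a \<Rightarrow> 'a" where "G x = (\<Sum>b\<in>Basis. (s ^ weight (u b) * (x \<bullet> b)) *\<^sub>R b)" for x
  have "linear A"
    unfolding A_def by (intro linearI) (simp_all add: inner_add_left scaleR_add_left sum.distrib scaleR_sum_right)
  have "linear G"
    unfolding G_def by (intro linearI) (simp_all add: inner_add_left algebra_simps sum.distrib scaleR_sum_right)
  have "adapted_basis \<subseteq> range A"
  proof
    fix v assume "v \<in> adapted_basis"
    then obtain b where b: "b \<in> Basis" "v = u b"
      using u by (auto simp: bij_betw_def)
    have "A b = (\<Sum>b'\<in>Basis. if b' = b then u b' else 0)"
      unfolding A_def using b(1) by (intro sum.cong) (auto simp: inner_Basis)
    with b have "A b = v"
      by simp
    then show "v \<in> range A"
      by blast
  qed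
  then have "surj A"
    using span_minimal[OF _ linear_subspace_image[OF \<open>linear A\<close> subspace_UNIV]] span_adapted_basis
    by blast
  have "G (\<Sum>b\<in>Basis. (inverse (s ^ weight (u b)) * (y \<bullet> b)) *\<^sub>R b) = (\<Sum>b\<in>Basis. (y \<bullet> b) *\<^sub>R b)" for y
    unfolding G_def using assms by (intro sum.cong refl) simp
  then have "surj G"
    unfolding euclidean_representation by (rule surjI)
  have "\<delta> s \<circ> A = A \<circ> G"
  proof
    fix x
    have "\<delta> s (A x) = (\<Sum>b\<in>Basis. (x \<bullet> b) *\<^sub>R \<delta> s (u b))"
      unfolding A_def by (simp add: linear_sum[OF linear_dil] linear_scale[OF linear_dil])
    also have "\<dots> = (\<Sum>b\<in>Basis. (s ^ weight (u b) * (x \<bullet> b)) *\<^sub>R u b)"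
      using bij_betwE[OF u] by (intro sum.cong refl) (simp add: dil_stratum[OF adapted_basis_in_stratum])
    finally show "(\<delta> s \<circ> A) x = (A \<circ> G) x"
      by (simp add: A_def G_def)
  qed
  then have "linear_vimage_factor (\<delta> s) = linear_vimage_factor G"
    by (rule linear_vimage_factor_similar[OF linear_dil \<open>linear G\<close> \<open>surj G\<close> \<open>linear A\<close> \<open>surj A\<close>])
  also have "\<dots> = ennreal (1 / (\<Prod>b\<in>Basis. \<bar>s ^ weight (u b)\<bar>))"
    unfolding G_def using assms by (intro linear_vimage_factor_diagonal) simp
  also have "(\<Prod>b\<in>Basis. \<bar>s ^ weight (u b)\<bar>) = s ^ (\<Sum>b\<in>Basis. weight (u b))"
    using assms by (simp add: power_sum)
  also have "(\<Sum>b\<in>Basis. weight (u b)) = (\<Sum>v\<in>adapted_basis. weight v)"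
    by (rule sum.reindex_bij_betw[OF u])
  finally show ?thesis
    by (simp add: sum_weight)
qed

lemma distr_lborel_dil:
  assumes "s > 0"
  shows "distr lborel borel (\<delta> s) = density lborel (\<lambda>_. ennreal (1 / s ^ hom_dim m V))"
proof (rule measure_eqI)
  fix X assume "X \<in> sets (distr lborel borel (\<delta> s))"
  then have "X \<in> sets borel"
    by simp
  then show "emeasure (distr lborel borel (\<delta> s)) X = emeasure (density lborel (\<lambda>_. ennreal (1 / s ^ hom_dim m V))) X"
    using assms linear_borel_measurable[OF linear_dil]
    by (simp add: emeasure_distr emeasure_linear_vimage[OF linear_dil surj_dil] linear_vimage_factor_dil
        emeasure_density nn_integral_cmult_indicator)
qed simp

lemma integral_lborel_dil:
  fixes F :: "'a \<Rightarrow> real"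
  assumes "s > 0"
  shows "(\<integral>x. F (\<delta> s x) \<partial>lborel) = (1 / s ^ hom_dim m V) * (\<integral>x. F x \<partial>lborel)"
proof (cases "F \<in> borel_measurable borel")
  case True
  have "(\<integral>x. F (\<delta> s x) \<partial>lborel) = (\<integral>x. F x \<partial>(distr lborel borel (\<delta> s)))"
    using True linear_borel_measurable[OF linear_dil] by (intro integral_distr[symmetric]) auto
  also have "\<dots> = (\<integral>x. (1 / s ^ hom_dim m V) *\<^sub>R F x \<partial>lborel)"
    using True assms by (simp add: distr_lborel_dil integral_density)
  finally show ?thesis
    by simp
next
  case False
  have "(\<lambda>x. F (\<delta> s x)) \<notin> borel_measurable borel"
  proof
    assume "(\<lambda>x. F (\<delta> s x)) \<in> borel_measurable borel"
    then have "(\<lambda>y. F (\<delta> s (\<delta> (inverse s) y))) \<in> borel_measurable borel"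
      by (rule measurable_compose[OF linear_borel_measurable[OF linear_dil]])
    with False assms show False
      by (simp add: dil_inverse)
  qed
  with False have "\<not> integrable lborel (\<lambda>x. F (\<delta> s x))" "\<not> integrable lborel F"
    using borel_measurable_integrable by (auto simp del: measurable_lborel2)
  then show ?thesis
    by (simp add: not_integrable_integral_eq)
qed

end

lemma wedge_pair_scale: "wedge_pair k (\<lambda>i X. r * \<alpha> i X) lam = r ^ k * wedge_pair k \<alpha> lam"
proof -
  have "(\<lambda>(c, vs). c * (\<Sum>\<sigma> | \<sigma> permutes {..<k}. of_int (sign \<sigma>) * (\<Prod>i<k. r * \<alpha> i (vs ! \<sigma> i))))
      = (\<lambda>x. r ^ k * (\<lambda>(c, vs). c * (\<Sum>\<sigma> | \<sigma> permutes {..<k}. of_int (sign \<sigma>) * (\<Prod>i<k. \<alpha> i (vs ! \<sigma> i)))) x)"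
    by (auto simp: fun_eq_iff prod.distrib sum_distrib_left algebra_simps)
  then show ?thesis
    unfolding wedge_pair_def by (simp add: sum_list_const_mult)
qed

theorem lemma9p2:
  fixes br :: "'a::euclidean_space \<Rightarrow> 'a \<Rightarrow> 'a" and m k :: nat and V :: "nat \<Rightarrow> 'a set"
    and lam :: "(real \<times> 'a list) list" and r :: real
  assumes "carnot br m V" and "kvec k V lam" and "0 < r"
  shows "\<forall>f g. test_fun br m V f \<longrightarrow> (\<forall>i<k. cc_loc_lipschitz br m V (g i)) \<longrightarrow>
           dil_push m V r (inv_precurrent br m V k lam) f g
             = r powr (real k - real (hom_dim m V)) * inv_precurrent br m V k lam f g"
proof (intro allI impI)
  fix f :: "'a \<Rightarrow> real" and g :: "nat \<Rightarrow> 'a \<Rightarrow> real"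
  interpret carnot_algebra br m V
    by (rule carnot_algebra.intro) (rule assms(1))
  define F where "F p = f p * wedge_pair k (\<lambda>i. pansu_diff br m V (g i) p) lam" for p
  have "dil_push m V r (inv_precurrent br m V k lam) f g = (\<integral>p. r ^ k * F (\<delta> r p) \<partial>lborel)"
    unfolding dil_push_def inv_precurrent_def F_def
    by (simp add: pansu_diff_dil[OF assms(3)] wedge_pair_scale algebra_simps)
  also have "\<dots> = r ^ k * ((1 / r ^ hom_dim m V) * (\<integral>p. F p \<partial>lborel))"
    by (simp add: integral_lborel_dil[OF assms(3)])
  also have "\<dots> = r powr (real k - real (hom_dim m V)) * inv_precurrent br m V k lam f g"
    unfolding inv_precurrent_def F_def[symmetric]
    using assms(3) by (simp add: powr_diff powr_realpow)
  finally show "dil_push m V r (inv_precurrent br m V k lam) f g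
      = r powr (real k - real (hom_dim m V)) * inv_precurrent br m V k lam f g" .
qed

end
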